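(* Let $\Bbbk$ be a field of characteristic zero and $\lambda,\mu\in\Bbbk^*$. Then $\mathcal O(\lambda)\cong\mathcal O(\mu)$ as Lie algebras if and only if $\sqrt{\lambda/\mu}\in\Bbbk$ (i.e. $\lambda/\mu$ is a square in $\Bbbk$).
   Context: $\mathcal W$ is the Witt algebra over $\Bbbk$ with basis $L_n$ ($n\in\mathbb{Z}$) and $[L_n,L_m]=(n-m)L_{n+m}$. For $\lambda\in\Bbbk^*$, $\mathcal O(\lambda)$ is the subalgebra of $\mathcal W$ spanned by $L_n-\lambda^nL_{-n}$, $n\ge1$. *)

theory Defs
  imports Main
begin

text \<open>The Witt algebra over a field 'k: elements are finitely supported
  coefficient functions int => 'k, x = sum_n x(n) L_n.\<close>

definition witt_carrier :: "(int \<Rightarrow> 'k::field) set" where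
  "witt_carrier = {x. finite {n. x n \<noteq> 0}}"

definition wL :: "int \<Rightarrow> int \<Rightarrow> 'k::field" where
  "wL n = (\<lambda>i. if i = n then 1 else 0)"

definition wadd :: "(int \<Rightarrow> 'k::field) \<Rightarrow> (int \<Rightarrow> 'k) \<Rightarrow> int \<Rightarrow> 'k" where
  "wadd x y = (\<lambda>i. x i + y i)"

definition wscale :: "'k::field \<Rightarrow> (int \<Rightarrow> 'k) \<Rightarrow> int \<Rightarrow> 'k" where
  "wscale a x = (\<lambda>i. a * x i)"

text \<open>Lie bracket extending [L_n, L_m] = (n - m) L_(n+m) bilinearly:
  the coefficient of L_p in [x,y] is the sum over n + m = p of (n - m) x(n) y(m).\<close>
definition wbracket :: "(int \<Rightarrow> 'k::field) \<Rightarrow> (int \<Rightarrow> 'k) \<Rightarrow> int \<Rightarrow> 'k" where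
  "wbracket x y = (\<lambda>p. \<Sum>n\<in>{n. x n \<noteq> 0}. of_int (n - (p - n)) * x n * y (p - n))"

definition Ogen :: "'k::field \<Rightarrow> nat \<Rightarrow> int \<Rightarrow> 'k" where
  "Ogen lam n = (\<lambda>i. wL (int n) i - lam ^ n * wL (- int n) i)"

definition Osub :: "'k::field \<Rightarrow> (int \<Rightarrow> 'k) set" where
  "Osub lam = {x. \<exists>S c. finite S \<and> S \<subseteq> {1..} \<and>
       x = (\<lambda>i. \<Sum>n\<in>S. c n * Ogen lam n i)}"

definition lie_iso_sub :: "(int \<Rightarrow> 'k::field) set \<Rightarrow> (int \<Rightarrow> 'k) set \<Rightarrow> bool" where
  "lie_iso_sub A B = (\<exists>\<phi>. bij_betw \<phi> A B \<and>
      (\<forall>x\<in>A. \<forall>y\<in>A. \<forall>a b. \<phi> (wadd (wscale a x) (wscale b y)) = wadd (wscale a (\<phi> x)) (wscale b (\<phi> y))) \<and>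
      (\<forall>x\<in>A. \<forall>y\<in>A. \<phi> (wbracket x y) = wbracket (\<phi> x) (\<phi> y)))"

end

(*
  If lam = r^2 mu, the rescaling L_n |-> r^n L_n maps O(lam) onto O(mu) and preserves brackets.

  Conversely, let phi be an isomorphism from O(lam) onto O(mu). Viewing L_n as the vector field
  -t^(n+1) d/dt, the elements of O(lam) are fields f d/dt with f(s) = 0 for s = sqrt lam, which
  we adjoin formally: E = k[s]/(s^2 - lam). The jet f d/dt |-> -(f'(s), f'''(s))/2 is a
  homomorphism from O(lam) to E^2 with the two-step nilpotent bracket
  [(a, c), (a', c')] = (0, 4 (a' c - a c')). The jets w_n = (a_n, c_n) of the preimages of the
  generators of O(mu) satisfy the structure relations of O(mu). Those for [w_n, w_1] make every
  a_n a multiple of a_1 or a_2, and every c_n as well modulo D = a_2 c_1 - a_1 c_2. The jets of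
  the first two generators of O(lam) lie in the span of the w_n and their bracket is the unit
  -24 s, so D is a unit. The relations for [w_3, w_2] and [w_4, w_3] then give
  3 a_2 = 4 mu + 2 a_1^2 and (a_1^2 - mu)(a_1^2 - 4 mu) = 0; since a_1 and a_2 are linearly
  independent over k, solving these in E = k + k s forces lam / mu to be a square in k.
*)
theory Submission
  imports Defs "HOL-Library.Product_Plus"
begin

section \<open>The subalgebras O(\<lambda>) of the Witt algebra\<close>

lemma witt_carrier_lincomb:
  assumes "x \<in> witt_carrier" "y \<in> witt_carrier"
  shows "(\<lambda>i. a * x i + b * y i) \<in> witt_carrier"
proof -
  have "{i. a * x i + b * y i \<noteq> 0} \<subseteq> {i. x i \<noteq> 0} \<union> {i. y i \<noteq> 0}" by auto
  with assms show ?thesis unfolding witt_carrier_def by (auto intro: finite_subset)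
qed

lemma witt_carrier_scale: "x \<in> witt_carrier \<Longrightarrow> (\<lambda>i. a * x i) \<in> witt_carrier"
  using witt_carrier_lincomb[of x x a 0] by simp

lemma witt_carrier_sum:
  assumes "finite J" "\<And>j. j \<in> J \<Longrightarrow> g j \<in> witt_carrier"
  shows "(\<lambda>i. \<Sum>j\<in>J. g j i) \<in> witt_carrier"
proof -
  have "{i. (\<Sum>j\<in>J. g j i) \<noteq> 0} \<subseteq> (\<Union>j\<in>J. {i. g j i \<noteq> 0})"
    by (auto intro: ccontr simp: sum.neutral)
  moreover have "finite (\<Union>j\<in>J. {i. g j i \<noteq> 0})"
    using assms by (auto simp: witt_carrier_def)
  ultimately show ?thesis by (auto simp: witt_carrier_def intro: finite_subset)
qed

lemma wbracket_eq_sum: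
  assumes "finite F" "{n. x n \<noteq> 0} \<subseteq> F"
  shows "wbracket x y p = (\<Sum>n\<in>F. of_int (n - (p - n)) * x n * y (p - n))"
  unfolding wbracket_def by (rule sum.mono_neutral_left) (use assms in auto)

lemma wbracket_sum_left:
  assumes "finite J" "\<And>j. j \<in> J \<Longrightarrow> g j \<in> witt_carrier"
  shows "wbracket (\<lambda>i. \<Sum>j\<in>J. g j i) y p = (\<Sum>j\<in>J. wbracket (g j) y p)"
proof -
  define F where "F = (\<Union>j\<in>J. {i. g j i \<noteq> 0})"
  have F: "finite F" using assms by (auto simp: witt_carrier_def F_def)
  have "wbracket (\<lambda>i. \<Sum>j\<in>J. g j i) y p = (\<Sum>n\<in>F. of_int (n - (p - n)) * (\<Sum>j\<in>J. g j n) * y (p - n))"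
    by (rule wbracket_eq_sum[OF F]) (auto intro: ccontr simp: sum.neutral F_def)
  also have "\<dots> = (\<Sum>j\<in>J. \<Sum>n\<in>F. of_int (n - (p - n)) * g j n * y (p - n))"
    by (simp add: sum_distrib_left sum_distrib_right mult.assoc sum.swap[of _ F])
  also have "\<dots> = (\<Sum>j\<in>J. wbracket (g j) y p)"
    by (rule sum.cong[OF refl], rule wbracket_eq_sum[symmetric]) (use F in \<open>auto simp: F_def\<close>)
  finally show ?thesis .
qed

lemma wbracket_sum_right:
  "wbracket x (\<lambda>i. \<Sum>j\<in>J. g j i) p = (\<Sum>j\<in>J. wbracket x (g j) p)"
  unfolding wbracket_def by (simp add: sum_distrib_left sum.swap[of _ J])

lemma wbracket_scale_left: "wbracket (\<lambda>i. c * x i) y p = c * wbracket x y p"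
proof (cases "c = 0")
  case True
  then show ?thesis by (simp add: wbracket_def)
next
  case False
  then have "{n. c * x n \<noteq> 0} = {n. x n \<noteq> 0}" by auto
  then show ?thesis
    unfolding wbracket_def by (simp add: sum_distrib_left mult.assoc mult.left_commute)
qed

lemma wbracket_scale_right: "wbracket x (\<lambda>i. c * y i) p = c * wbracket x y p"
  unfolding wbracket_def by (simp add: sum_distrib_left mult.assoc mult.left_commute)

lemma Ogen_apply:
  "n \<ge> 1 \<Longrightarrow> Ogen l n i = (if i = int n then 1 else if i = - int n then - (l ^ n) else 0)"
  by (auto simp: Ogen_def wL_def)

lemma Ogen_support: "n \<ge> 1 \<Longrightarrow> {i. Ogen l n i \<noteq> 0} \<subseteq> {int n, - int n}"
  by (auto simp: Ogen_apply split: if_splits)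

lemma Ogen_in_witt_carrier: "n \<ge> 1 \<Longrightarrow> Ogen l n \<in> witt_carrier"
  unfolding witt_carrier_def using Ogen_support by (auto intro: finite_subset)

lemma wbracket_Ogen_left:
  assumes "n \<ge> 1"
  shows "wbracket (Ogen l n) y p
    = of_int (2 * int n - p) * y (p - int n) + of_int (2 * int n + p) * l ^ n * y (p + int n)"
proof -
  have "wbracket (Ogen l n) y p
      = (\<Sum>i\<in>{int n, - int n}. of_int (i - (p - i)) * Ogen l n i * y (p - i))"
    by (rule wbracket_eq_sum) (use Ogen_support[OF assms] in auto)
  also have "\<dots> = of_int (2 * int n - p) * y (p - int n) + of_int (2 * int n + p) * l ^ n * y (p + int n)"
    using assms by (simp add: Ogen_apply algebra_simps)
  finally show ?thesis .
qed

lemma wbracket_Ogen_greater: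
  assumes "1 \<le> m" "m < n"
  shows "wbracket (Ogen l n) (Ogen l m)
    = (\<lambda>p. of_nat (n - m) * Ogen l (n + m) p - of_nat (n + m) * l ^ m * Ogen l (n - m) p)"
proof
  fix p
  have "l ^ n = l ^ m * l ^ (n - m)" using assms by (simp add: power_add[symmetric])
  then show "wbracket (Ogen l n) (Ogen l m) p
      = of_nat (n - m) * Ogen l (n + m) p - of_nat (n + m) * l ^ m * Ogen l (n - m) p"
    using assms unfolding wbracket_Ogen_left[OF order.trans[OF assms(1) less_imp_le[OF assms(2)]]]
    by (auto simp: Ogen_apply of_nat_diff power_add algebra_simps
        dest!: eq_diff_eq[where 'a = int, THEN iffD2])
qed

lemma wbracket_Ogen_self:
  assumes "1 \<le> n"
  shows "wbracket (Ogen l n) (Ogen l n) = (\<lambda>p. 0)"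
proof
  fix p
  show "wbracket (Ogen l n) (Ogen l n) p = 0"
    using assms unfolding wbracket_Ogen_left[OF assms]
    by (auto simp: Ogen_apply algebra_simps dest!: eq_diff_eq[where 'a = int, THEN iffD2])
qed

lemma wbracket_Ogen_less:
  assumes "1 \<le> n" "n < m"
  shows "wbracket (Ogen l n) (Ogen l m)
    = (\<lambda>p. of_nat (n + m) * l ^ n * Ogen l (m - n) p - of_nat (m - n) * Ogen l (n + m) p)"
proof
  fix p
  have "l ^ m = l ^ n * l ^ (m - n)" using assms by (simp add: power_add[symmetric])
  then show "wbracket (Ogen l n) (Ogen l m) p
      = of_nat (n + m) * l ^ n * Ogen l (m - n) p - of_nat (m - n) * Ogen l (n + m) p"
    using assms unfolding wbracket_Ogen_left[OF assms(1)]
    by (auto simp: Ogen_apply of_nat_diff power_add algebra_simps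
        dest!: eq_diff_eq[where 'a = int, THEN iffD2])
qed

lemma Ogen_in_Osub: "1 \<le> n \<Longrightarrow> Ogen l n \<in> Osub l"
  unfolding Osub_def by (intro CollectI exI[of _ "{n}"] exI[of _ "\<lambda>_. 1"]) auto

lemma Osub_witt_carrier:
  assumes "x \<in> Osub l"
  shows "x \<in> witt_carrier"
proof -
  obtain S c where S: "finite S" "S \<subseteq> {1..}" "x = (\<lambda>i. \<Sum>n\<in>S. c n * Ogen l n i)"
    using assms unfolding Osub_def by blast
  then show ?thesis
    by (auto intro!: witt_carrier_sum witt_carrier_scale Ogen_in_witt_carrier)
qed

lemma Osub_lincomb:
  assumes "x \<in> Osub l" "y \<in> Osub l"
  shows "(\<lambda>i. a * x i + b * y i) \<in> Osub l"
proof -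
  obtain S c where S: "finite S" "S \<subseteq> {1..}" "x = (\<lambda>i. \<Sum>n\<in>S. c n * Ogen l n i)"
    using assms(1) unfolding Osub_def by blast
  obtain T d where T: "finite T" "T \<subseteq> {1..}" "y = (\<lambda>i. \<Sum>n\<in>T. d n * Ogen l n i)"
    using assms(2) unfolding Osub_def by blast
  define c' where "c' n = (if n \<in> S then c n else 0)" for n
  define d' where "d' n = (if n \<in> T then d n else 0)" for n
  have "(\<Sum>n\<in>S \<union> T. c' n * Ogen l n i) = (\<Sum>n\<in>S. c' n * Ogen l n i)" for i
    by (rule sum.mono_neutral_right) (auto simp: c'_def S(1) T(1))
  then have x: "x i = (\<Sum>n\<in>S \<union> T. c' n * Ogen l n i)" for i
    by (simp add: S(3) c'_def)
  have "(\<Sum>n\<in>S \<union> T. d' n * Ogen l n i) = (\<Sum>n\<in>T. d' n * Ogen l n i)" for i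
    by (rule sum.mono_neutral_right) (auto simp: d'_def S(1) T(1))
  then have y: "y i = (\<Sum>n\<in>S \<union> T. d' n * Ogen l n i)" for i
    by (simp add: T(3) d'_def)
  have "(\<lambda>i. a * x i + b * y i) = (\<lambda>i. \<Sum>n\<in>S \<union> T. (a * c' n + b * d' n) * Ogen l n i)"
    by (simp add: x y sum_distrib_left sum.distrib algebra_simps)
  then show ?thesis
    unfolding Osub_def using S(1,2) T(1,2)
    by (intro CollectI exI[of _ "S \<union> T"] exI[of _ "\<lambda>n. a * c' n + b * d' n"]) auto
qed

lemma Osub_zero: "(\<lambda>i. 0) \<in> Osub l"
  unfolding Osub_def by (intro CollectI exI[of _ "{}"]) auto

lemma Osub_scale: "x \<in> Osub l \<Longrightarrow> (\<lambda>i. c * x i) \<in> Osub l"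
  using Osub_lincomb[of x l x c 0] by simp

lemma Osub_diff: "x \<in> Osub l \<Longrightarrow> y \<in> Osub l \<Longrightarrow> (\<lambda>i. a * x i - b * y i) \<in> Osub l"
  using Osub_lincomb[of x l y a "- b"] by simp

lemma Osub_sum:
  assumes "finite J" "\<And>j. j \<in> J \<Longrightarrow> g j \<in> Osub l"
  shows "(\<lambda>i. \<Sum>j\<in>J. g j i) \<in> Osub l"
  using assms
proof (induction J rule: finite_induct)
  case empty
  then show ?case by (simp add: Osub_zero)
next
  case (insert j J)
  then show ?case using Osub_lincomb[of "g j" l _ 1 1] by simp
qed

lemma wbracket_Ogen_in_Osub:
  assumes "1 \<le> n" "1 \<le> m"
  shows "wbracket (Ogen l n) (Ogen l m) \<in> Osub l"
proof -
  consider "m < n" | "n = m" | "n < m" by linarith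
  then show ?thesis
    by cases (use assms in \<open>simp_all add: wbracket_Ogen_greater wbracket_Ogen_self
      wbracket_Ogen_less Osub_diff Ogen_in_Osub Osub_zero\<close>)
qed

lemma wbracket_Osub_expand:
  assumes "finite S" "S \<subseteq> {1..}" "finite T"
  shows "wbracket (\<lambda>i. \<Sum>n\<in>S. c n * Ogen l n i) (\<lambda>i. \<Sum>m\<in>T. d m * Ogen l m i)
    = (\<lambda>p. \<Sum>n\<in>S. \<Sum>m\<in>T. c n * d m * wbracket (Ogen l n) (Ogen l m) p)"
proof
  fix p
  have "wbracket (\<lambda>i. \<Sum>n\<in>S. c n * Ogen l n i) (\<lambda>i. \<Sum>m\<in>T. d m * Ogen l m i) p
      = (\<Sum>n\<in>S. c n * wbracket (Ogen l n) (\<lambda>i. \<Sum>m\<in>T. d m * Ogen l m i) p)"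
    using assms(1,2)
    by (subst wbracket_sum_left) (auto simp: wbracket_scale_left
        intro!: witt_carrier_scale Ogen_in_witt_carrier)
  then show "wbracket (\<lambda>i. \<Sum>n\<in>S. c n * Ogen l n i) (\<lambda>i. \<Sum>m\<in>T. d m * Ogen l m i) p
      = (\<Sum>n\<in>S. \<Sum>m\<in>T. c n * d m * wbracket (Ogen l n) (Ogen l m) p)"
    by (simp add: wbracket_sum_right wbracket_scale_right sum_distrib_left mult.assoc)
qed

lemma Osub_wbracket:
  assumes "x \<in> Osub l" "y \<in> Osub l"
  shows "wbracket x y \<in> Osub l"
proof -
  obtain S c where S: "finite S" "S \<subseteq> {1..}" "x = (\<lambda>i. \<Sum>n\<in>S. c n * Ogen l n i)"
    using assms(1) unfolding Osub_def by blast
  obtain T d where T: "finite T" "T \<subseteq> {1..}" "y = (\<lambda>i. \<Sum>n\<in>T. d n * Ogen l n i)"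
    using assms(2) unfolding Osub_def by blast
  show ?thesis
    unfolding S(3) T(3) wbracket_Osub_expand[OF S(1,2) T(1)] using S(1,2) T(1,2)
    by (intro Osub_sum) (auto simp: mult.assoc intro!: Osub_scale wbracket_Ogen_in_Osub)
qed

section \<open>Rescaling\<close>

definition dilate :: "'k::field \<Rightarrow> (int \<Rightarrow> 'k) \<Rightarrow> int \<Rightarrow> 'k" where
  "dilate s x = (\<lambda>i. s powi i * x i)"

lemma dilate_inverse: "s \<noteq> 0 \<Longrightarrow> dilate (inverse s) (dilate s x) = x"
  by (auto simp: dilate_def power_int_inverse)

lemma dilate_wbracket:
  assumes "s \<noteq> 0"
  shows "dilate s (wbracket x y) = wbracket (dilate s x) (dilate s y)"
proof
  fix p
  have supp: "{n. dilate s x n \<noteq> 0} = {n. x n \<noteq> 0}"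
    using assms by (auto simp: dilate_def power_int_not_zero)
  have "wbracket (dilate s x) (dilate s y) p = (\<Sum>n\<in>{n. x n \<noteq> 0}.
      of_int (n - (p - n)) * (s powi n * x n) * (s powi (p - n) * y (p - n)))"
    unfolding wbracket_def supp by (simp add: dilate_def)
  also have "\<dots> = (\<Sum>n\<in>{n. x n \<noteq> 0}. s powi p * (of_int (n - (p - n)) * x n * y (p - n)))"
  proof (rule sum.cong[OF refl])
    fix n
    have "s powi p = s powi n * s powi (p - n)"
      using assms by (simp add: power_int_add[symmetric])
    then show "of_int (n - (p - n)) * (s powi n * x n) * (s powi (p - n) * y (p - n))
        = s powi p * (of_int (n - (p - n)) * x n * y (p - n))"
      by (simp add: mult_ac)
  qed
  also have "\<dots> = dilate s (wbracket x y) p"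
    by (simp add: dilate_def wbracket_def sum_distrib_left)
  finally show "dilate s (wbracket x y) p = wbracket (dilate s x) (dilate s y) p" ..
qed

lemma dilate_Ogen:
  fixes s l l' :: "'k::field"
  assumes "s \<noteq> 0" "l = s\<^sup>2 * l'" "1 \<le> n"
  shows "dilate s (Ogen l n) = (\<lambda>i. s ^ n * Ogen l' n i)"
proof
  fix i
  have "l ^ n = s ^ n * s ^ n * l' ^ n"
    using assms(2) by (simp add: power_mult_distrib power2_eq_square)
  moreover have "s ^ n \<noteq> 0" using assms(1) by simp
  ultimately show "dilate s (Ogen l n) i = s ^ n * Ogen l' n i"
    using assms(3) by (auto simp: dilate_def Ogen_apply power_int_minus)
qed

lemma dilate_Osub:
  fixes s l l' :: "'k::field"
  assumes "s \<noteq> 0" "l = s\<^sup>2 * l'" "x \<in> Osub l"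
  shows "dilate s x \<in> Osub l'"
proof -
  obtain S c where S: "finite S" "S \<subseteq> {1..}" "x = (\<lambda>i. \<Sum>n\<in>S. c n * Ogen l n i)"
    using assms(3) unfolding Osub_def by blast
  have "dilate s x = (\<lambda>i. \<Sum>n\<in>S. (c n * s ^ n) * Ogen l' n i)"
  proof
    fix i
    have "dilate s x i = (\<Sum>n\<in>S. c n * dilate s (Ogen l n) i)"
      by (simp add: S(3) dilate_def sum_distrib_left mult.left_commute)
    also have "\<dots> = (\<Sum>n\<in>S. (c n * s ^ n) * Ogen l' n i)"
      using S(2) by (intro sum.cong) (auto simp: dilate_Ogen[OF assms(1,2)])
    finally show "dilate s x i = (\<Sum>n\<in>S. (c n * s ^ n) * Ogen l' n i)" .
  qed
  then show ?thesis
    unfolding Osub_def using S(1,2) by (intro CollectI exI[of _ S] exI[of _ "\<lambda>n. c n * s ^ n"]) auto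
qed

lemma lie_iso_sub_Osub_if_square:
  fixes lam mu r :: "'k::field"
  assumes "lam \<noteq> 0" "mu \<noteq> 0" "r\<^sup>2 = lam / mu"
  shows "lie_iso_sub (Osub lam) (Osub mu)"
proof -
  have r: "r \<noteq> 0" using assms by auto
  have lam: "lam = r\<^sup>2 * mu" and mu: "mu = (inverse r)\<^sup>2 * lam"
    using assms r by (simp_all add: field_simps power_inverse)
  have "bij_betw (dilate r) (Osub lam) (Osub mu)"
    by (rule bij_betw_byWitness[where f' = "dilate (inverse r)"])
      (use r dilate_inverse[of r] dilate_inverse[of "inverse r"] dilate_Osub[OF _ lam]
        dilate_Osub[OF _ mu] in auto)
  moreover have "dilate r (wadd (wscale a x) (wscale b y))
      = wadd (wscale a (dilate r x)) (wscale b (dilate r y))" for a b x y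
    by (simp add: dilate_def wadd_def wscale_def algebra_simps)
  ultimately show ?thesis
    unfolding lie_iso_sub_def using dilate_wbracket[OF r] by blast
qed

section \<open>The algebra k[s]/(s^2 - \<lambda>)\<close>

(* Pairs (a, b) stand for a + b s. *)
definition qmul :: "'k::field \<Rightarrow> 'k \<times> 'k \<Rightarrow> 'k \<times> 'k \<Rightarrow> 'k \<times> 'k" where
  "qmul l x y = (fst x * fst y + l * snd x * snd y, fst x * snd y + snd x * fst y)"

definition qscale :: "'k::field \<Rightarrow> 'k \<times> 'k \<Rightarrow> 'k \<times> 'k" where
  "qscale c x = (c * fst x, c * snd x)"

primrec qroot_pow :: "'k::field \<Rightarrow> nat \<Rightarrow> 'k \<times> 'k" where
  "qroot_pow l 0 = (1, 0)"
| "qroot_pow l (Suc n) = qmul l (0, 1) (qroot_pow l n)"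

lemma qmul_commute: "qmul l x y = qmul l y x"
  by (simp add: qmul_def algebra_simps)

lemma qmul_assoc: "qmul l (qmul l x y) z = qmul l x (qmul l y z)"
  by (simp add: qmul_def algebra_simps)

lemma qmul_add_right: "qmul l z (x + y) = qmul l z x + qmul l z y"
  by (simp add: qmul_def algebra_simps)

lemma qmul_diff_right: "qmul l z (x - y) = qmul l z x - qmul l z y"
  by (simp add: qmul_def algebra_simps)

lemma qmul_qscale_left: "qmul l (qscale c x) y = qscale c (qmul l x y)"
  by (simp add: qmul_def qscale_def algebra_simps)

lemma qmul_qscale_right: "qmul l x (qscale c y) = qscale c (qmul l x y)"
  by (simp add: qmul_def qscale_def algebra_simps)

lemma qmul_zero_right [simp]: "qmul l y 0 = 0"
  by (simp add: qmul_def zero_prod_def)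

lemma qmul_one_left [simp]: "qmul l (1, 0) y = y"
  by (simp add: qmul_def)

lemma qscale_qscale: "qscale a (qscale b x) = qscale (a * b) x"
  by (simp add: qscale_def)

lemma qscale_diff_left: "qscale (a - b) x = qscale a x - qscale b x"
  by (simp add: qscale_def algebra_simps)

lemma qscale_zero [simp]: "qscale 0 x = 0" "qscale c 0 = 0"
  by (simp_all add: qscale_def zero_prod_def)

lemma qscale_one [simp]: "qscale 1 x = x"
  by (simp add: qscale_def)

lemma qscale_eq_0_iff: "qscale k x = 0 \<longleftrightarrow> k = 0 \<or> x = 0"
  by (auto simp: qscale_def prod_eq_iff)

lemma qscale_cancel: "k \<noteq> 0 \<Longrightarrow> qscale k x = qscale k y \<Longrightarrow> x = y"
  by (auto simp: qscale_def prod_eq_iff)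

lemma qroot_pow_add: "qmul l (qroot_pow l a) (qroot_pow l b) = qroot_pow l (a + b)"
  by (induction a) (simp_all add: qmul_assoc)

lemma qroot_pow_even: "qroot_pow l (2 * k) = (l ^ k, 0)"
  by (induction k) (simp_all add: qmul_def)

lemma qscale_power_qroot_pow: "qscale (l ^ k) (qroot_pow l a) = qroot_pow l (a + 2 * k)"
proof -
  have "qscale (l ^ k) (qroot_pow l a) = qmul l (qroot_pow l (2 * k)) (qroot_pow l a)"
    by (simp add: qroot_pow_even qmul_def qscale_def)
  then show ?thesis by (simp add: qroot_pow_add add.commute)
qed

(* n = 1 is where n - 2 truncates; there the coefficient vanishes. *)
lemma qscale_cubic_qroot_pow:
  fixes l :: "'k::field"
  assumes "1 \<le> n"
  shows "qscale (of_nat n * (of_nat n ^ 2 - 1)) (qroot_pow l (j + (n - 2)))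
    = qscale (of_nat n * (of_nat n ^ 2 - 1)) (qroot_pow l (j + n - 2))"
proof (cases "n = 1")
  case False
  then have "j + (n - 2) = j + n - 2" using assms by simp
  then show ?thesis by simp
qed simp

lemma qmul_qroot_pow_cubic:
  fixes l :: "'k::field"
  assumes "1 \<le> n"
  shows "qmul l (qroot_pow l j) (qscale (of_nat n * (of_nat n ^ 2 - 1)) (qroot_pow l (n - 2)))
    = qscale (of_nat n * (of_nat n ^ 2 - 1)) (qroot_pow l (j + n - 2))"
  using qscale_cubic_qroot_pow[OF assms, of l j] by (simp add: qmul_qscale_right qroot_pow_add)

lemma qscale_power_qroot_pow_cubic:
  fixes l :: "'k::field"
  assumes "1 \<le> n"
  shows "qscale (l ^ j) (qscale (of_nat n * (of_nat n ^ 2 - 1)) (qroot_pow l (n - 2)))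
    = qscale (of_nat n * (of_nat n ^ 2 - 1)) (qroot_pow l (2 * j + n - 2))"
proof -
  have "qscale (l ^ j) (qscale (of_nat n * (of_nat n ^ 2 - 1)) (qroot_pow l (n - 2)))
      = qscale (of_nat n * (of_nat n ^ 2 - 1)) (qscale (l ^ j) (qroot_pow l (n - 2)))"
    by (simp add: qscale_qscale mult.commute)
  also have "qscale (l ^ j) (qroot_pow l (n - 2)) = qroot_pow l (2 * j + (n - 2))"
    by (simp add: qscale_power_qroot_pow add.commute)
  finally show ?thesis by (simp only: qscale_cubic_qroot_pow[OF assms])
qed

lemma range_qmul_add: "x \<in> range (qmul l D) \<Longrightarrow> y \<in> range (qmul l D) \<Longrightarrow> x + y \<in> range (qmul l D)"
  by (auto simp: qmul_add_right[symmetric])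

lemma range_qmul_diff: "x \<in> range (qmul l D) \<Longrightarrow> y \<in> range (qmul l D) \<Longrightarrow> x - y \<in> range (qmul l D)"
  by (auto simp: qmul_diff_right[symmetric])

lemma range_qmul_qmul: "x \<in> range (qmul l D) \<Longrightarrow> qmul l z x \<in> range (qmul l D)"
  by (auto simp: qmul_commute[of l z] qmul_assoc)

lemma range_qmul_qscale: "x \<in> range (qmul l D) \<Longrightarrow> qscale c x \<in> range (qmul l D)"
  by (auto simp: qmul_qscale_right[symmetric])

lemma range_qmul_sum: "(\<And>j. j \<in> J \<Longrightarrow> f j \<in> range (qmul l D)) \<Longrightarrow> (\<Sum>j\<in>J. f j) \<in> range (qmul l D)"
  by (induction J rule: infinite_finite_induct) (auto intro: range_qmul_add image_eqI[of 0 _ 0])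

lemma qmul_cancel_unit:
  assumes "qmul l D Di = (1, 0)" "qmul l D X = 0"
  shows "X = 0"
proof -
  have "X = qmul l (qmul l D Di) X" by (simp add: assms(1))
  also have "\<dots> = qmul l Di (qmul l D X)" by (simp add: qmul_def algebra_simps)
  finally show ?thesis by (simp add: assms(2))
qed

lemma exists_sqrt_ratio_scalar:
  fixes x y l mu :: "'k::field_char_0"
  assumes "mu \<noteq> 0" "y \<noteq> 0"
    and quartic_1: "(x\<^sup>2 + l * y\<^sup>2)\<^sup>2 + l * (2 * x * y)\<^sup>2 - 5 * mu * (x\<^sup>2 + l * y\<^sup>2) + 4 * mu\<^sup>2 = 0"
    and quartic_s: "2 * x * y * (2 * (x\<^sup>2 + l * y\<^sup>2) - 5 * mu) = 0"
  shows "\<exists>r. r\<^sup>2 = l / mu"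
proof (cases "x = 0")
  case True
  then have "(l * y\<^sup>2 - mu) * (l * y\<^sup>2 - 4 * mu) = 0"
    using quartic_1 by (simp add: algebra_simps power2_eq_square)
  then have "l * y\<^sup>2 = mu \<or> l * y\<^sup>2 = 2\<^sup>2 * mu" by simp
  then obtain c where "l * y\<^sup>2 = c\<^sup>2 * mu" by (metis mult_1 power_one)
  then have "(c / y)\<^sup>2 = l / mu" using assms(1,2) by (simp add: power_divide field_simps)
  then show ?thesis by blast
next
  case False
  define U where "U = x\<^sup>2 + l * y\<^sup>2"
  define V where "V = 2 * x * y"
  have V: "V \<noteq> 0" using False assms(2) by (simp add: V_def)
  then have U: "2 * U = 5 * mu" using quartic_s by (simp add: U_def V_def)
  then have "4 * (l * V\<^sup>2) = 9 * mu\<^sup>2" using quartic_1 unfolding U_def[symmetric] V_def[symmetric]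
    by algebra
  define s where "s = 3 * mu / (2 * V)"
  have s: "s\<^sup>2 = l" using \<open>4 * (l * V\<^sup>2) = 9 * mu\<^sup>2\<close> V by (simp add: s_def field_simps power2_eq_square)
  have "(x + s * y)\<^sup>2 = U + s * V" using s by (simp add: U_def V_def power2_eq_square algebra_simps)
  also have "s * V = 3 * mu / 2" using V by (simp add: s_def)
  finally have sq: "(x + s * y)\<^sup>2 = 4 * mu" using U by (simp add: field_simps)
  then have "x + s * y \<noteq> 0" using assms(1) by auto
  then have "(2 * s / (x + s * y))\<^sup>2 = l / mu"
    by (simp add: power_divide sq s power_mult_distrib)
  then show ?thesis by blast
qed

lemma exists_sqrt_ratio:
  fixes l mu :: "'k::field_char_0"
  assumes "mu \<noteq> 0"
    and quadratic: "qscale 3 a2 = (4 * mu, 0) + qscale 2 (qmul l a1 a1)"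
    and quartic: "qmul l (qmul l a1 a1) (qmul l a1 a1) - qscale (5 * mu) (qmul l a1 a1) + (4 * mu\<^sup>2, 0) = 0"
    and independent: "fst a1 * snd a2 - fst a2 * snd a1 \<noteq> 0"
  shows "\<exists>r. r\<^sup>2 = l / mu"
proof (rule exists_sqrt_ratio_scalar[OF assms(1)])
  have "3 * snd a2 = 4 * fst a1 * snd a1"
    using quadratic by (simp add: qscale_def qmul_def prod_eq_iff algebra_simps)
  then show "snd a1 \<noteq> 0" using independent by auto
  show "((fst a1)\<^sup>2 + l * (snd a1)\<^sup>2)\<^sup>2 + l * (2 * fst a1 * snd a1)\<^sup>2
      - 5 * mu * ((fst a1)\<^sup>2 + l * (snd a1)\<^sup>2) + 4 * mu\<^sup>2 = 0"
    using arg_cong[OF quartic, of fst]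
    by (simp add: qscale_def qmul_def power2_eq_square algebra_simps)
  show "2 * fst a1 * snd a1 * (2 * ((fst a1)\<^sup>2 + l * (snd a1)\<^sup>2) - 5 * mu) = 0"
    using arg_cong[OF quartic, of snd]
    by (simp add: qscale_def qmul_def power2_eq_square algebra_simps)
qed

section \<open>Jets at a square root of \<lambda>\<close>

definition jscale :: "'k::field \<Rightarrow> ('k \<times> 'k) \<times> ('k \<times> 'k) \<Rightarrow> ('k \<times> 'k) \<times> ('k \<times> 'k)" where
  "jscale c u = (qscale c (fst u), qscale c (snd u))"

(* If f(s) = g(s) = 0, then h = f g' - f' g satisfies h(s) = h'(s) = 0 and
   h'''(s) = 2 (f' g''' - f''' g')(s). *)
definition jbracket ::
  "'k::field \<Rightarrow> ('k \<times> 'k) \<times> ('k \<times> 'k) \<Rightarrow> ('k \<times> 'k) \<times> ('k \<times> 'k) \<Rightarrow> ('k \<times> 'k) \<times> ('k \<times> 'k)" where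
  "jbracket l u w = ((0, 0), qscale 4 (qmul l (fst w) (snd u) - qmul l (fst u) (snd w)))"

definition jet_gen :: "'k::field \<Rightarrow> nat \<Rightarrow> ('k \<times> 'k) \<times> ('k \<times> 'k)" where
  "jet_gen l n = (qscale (of_nat n) (qroot_pow l n),
                  qscale (of_nat n * (of_nat n ^ 2 - 1)) (qroot_pow l (n - 2)))"

definition jet :: "'k::field \<Rightarrow> (int \<Rightarrow> 'k) \<Rightarrow> ('k \<times> 'k) \<times> ('k \<times> 'k)" where
  "jet l x = (\<Sum>n\<in>{n. x (int n) \<noteq> 0}. jscale (x (int n)) (jet_gen l n))"

lemma jscale_zero [simp]: "jscale 0 u = 0" "jscale c 0 = 0"
  by (simp_all add: jscale_def qscale_def zero_prod_def)

lemma jscale_jscale: "jscale a (jscale b u) = jscale (a * b) u"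
  by (simp add: jscale_def qscale_qscale)

lemma jscale_diff_left: "jscale (a - b) u = jscale a u - jscale b u"
  by (simp add: jscale_def qscale_def algebra_simps)

lemma jscale_add: "jscale c (u + w) = jscale c u + jscale c w"
  by (simp add: jscale_def qscale_def algebra_simps)

lemma jscale_add_left: "jscale (a + b) u = jscale a u + jscale b u"
  by (simp add: jscale_def qscale_def algebra_simps)

lemma jscale_sum: "jscale c (\<Sum>j\<in>J. f j) = (\<Sum>j\<in>J. jscale c (f j))"
  by (induction J rule: infinite_finite_induct) (auto simp: jscale_add)

lemma jscale_sum_left: "jscale (\<Sum>j\<in>J. f j) u = (\<Sum>j\<in>J. jscale (f j) u)"
  by (induction J rule: infinite_finite_induct) (auto simp: jscale_add_left)

lemma jbracket_add_left: "jbracket l (u + u') w = jbracket l u w + jbracket l u' w"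
  by (simp add: jbracket_def qmul_def qscale_def algebra_simps)

lemma jbracket_add_right: "jbracket l w (u + u') = jbracket l w u + jbracket l w u'"
  by (simp add: jbracket_def qmul_def qscale_def algebra_simps)

lemma jbracket_zero [simp]: "jbracket l 0 w = 0" "jbracket l w 0 = 0"
  by (simp_all add: jbracket_def qscale_def qmul_def zero_prod_def)

lemma jbracket_sum_left: "jbracket l (\<Sum>j\<in>J. f j) w = (\<Sum>j\<in>J. jbracket l (f j) w)"
  by (induction J rule: infinite_finite_induct) (auto simp: jbracket_add_left)

lemma jbracket_sum_right: "jbracket l w (\<Sum>j\<in>J. f j) = (\<Sum>j\<in>J. jbracket l w (f j))"
  by (induction J rule: infinite_finite_induct) (auto simp: jbracket_add_right)

lemma jbracket_jscale_left: "jbracket l (jscale c u) w = jscale c (jbracket l u w)"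
  by (simp add: jbracket_def jscale_def qscale_def qmul_def algebra_simps)

lemma jbracket_jscale_right: "jbracket l w (jscale c u) = jscale c (jbracket l w u)"
  by (simp add: jbracket_def jscale_def qscale_def qmul_def algebra_simps)

lemma jbracket_antisym: "jbracket l u w = - jbracket l w u"
  by (simp add: jbracket_def qscale_def qmul_commute algebra_simps)

lemma jbracket_self: "jbracket l u u = 0"
  by (simp add: jbracket_def qscale_def zero_prod_def)

lemma fst_jet_gen_relation:
  fixes l :: "'k::field"
  assumes "m < n"
  shows "qscale (of_nat (n - m)) (fst (jet_gen l (n + m)))
    = qscale (of_nat (n + m) * l ^ m) (fst (jet_gen l (n - m)))"
proof -
  have "qscale (of_nat (n + m) * l ^ m) (qscale (of_nat (n - m)) (qroot_pow l (n - m)))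
      = qscale (of_nat (n + m) * of_nat (n - m)) (qscale (l ^ m) (qroot_pow l (n - m)))"
    by (simp add: qscale_qscale mult_ac)
  also have "qscale (l ^ m) (qroot_pow l (n - m)) = qroot_pow l (n + m)"
    using assms by (simp add: qscale_power_qroot_pow add.commute)
  finally show ?thesis by (simp add: jet_gen_def qscale_qscale mult_ac)
qed

lemma jbracket_jet_gen:
  fixes l :: "'k::field"
  assumes "1 \<le> m" "m < n"
  shows "jbracket l (jet_gen l n) (jet_gen l m)
    = jscale (of_nat (n - m)) (jet_gen l (n + m)) - jscale (of_nat (n + m) * l ^ m) (jet_gen l (n - m))"
    (is "_ = ?rhs")
proof -
  define N where "N = (of_nat n :: 'k)"
  define M where "M = (of_nat m :: 'k)"
  define X where "X = qroot_pow l (n + m - 2)"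
  have nm: "of_nat (n - m) = N - M" using assms by (simp add: of_nat_diff N_def M_def)
  have fst_eq: "fst (jbracket l (jet_gen l n) (jet_gen l m)) = fst ?rhs"
    using fst_jet_gen_relation[OF assms(2), of l] by (simp add: jbracket_def jscale_def zero_prod_def)
  have "qmul l (fst (jet_gen l m)) (snd (jet_gen l n)) = qscale (M * (N * (N\<^sup>2 - 1))) X"
    using qmul_qroot_pow_cubic[of n l m] assms
    by (simp add: jet_gen_def qmul_qscale_left qscale_qscale X_def M_def N_def add.commute)
  moreover have "qmul l (fst (jet_gen l n)) (snd (jet_gen l m)) = qscale (N * (M * (M\<^sup>2 - 1))) X"
    using qmul_qroot_pow_cubic[of m l n] assms
    by (simp add: jet_gen_def qmul_qscale_left qscale_qscale X_def M_def N_def)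
  ultimately have "snd (jbracket l (jet_gen l n) (jet_gen l m))
      = qscale 4 (qscale (M * (N * (N\<^sup>2 - 1))) X - qscale (N * (M * (M\<^sup>2 - 1))) X)"
    by (simp add: jbracket_def)
  also have "\<dots> = qscale (4 * (M * (N * (N\<^sup>2 - 1)) - N * (M * (M\<^sup>2 - 1)))) X"
    by (simp add: qscale_def algebra_simps)
  also have "4 * (M * (N * (N\<^sup>2 - 1)) - N * (M * (M\<^sup>2 - 1)))
      = (N - M) * ((N + M) * ((N + M)\<^sup>2 - 1)) - (N + M) * ((N - M) * ((N - M)\<^sup>2 - 1))"
    by (simp add: algebra_simps power2_eq_square)
  also have "qscale \<dots> X = snd ?rhs"
  proof -
    have "1 \<le> n - m" "2 * m + (n - m) - 2 = n + m - 2" using assms by simp_all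
    then have "qscale (l ^ m) (snd (jet_gen l (n - m))) = qscale ((N - M) * ((N - M)\<^sup>2 - 1)) X"
      using qscale_power_qroot_pow_cubic[of "n - m" l m] by (simp add: jet_gen_def X_def nm)
    then have "qscale (of_nat (n + m) * l ^ m) (snd (jet_gen l (n - m)))
        = qscale ((N + M) * ((N - M) * ((N - M)\<^sup>2 - 1))) X"
      by (simp add: N_def M_def flip: qscale_qscale)
    moreover have "qscale (of_nat (n - m)) (snd (jet_gen l (n + m)))
        = qscale ((N - M) * ((N + M) * ((N + M)\<^sup>2 - 1))) X"
      by (simp add: jet_gen_def qscale_qscale nm N_def M_def X_def)
    ultimately show ?thesis by (simp add: jscale_def qscale_diff_left)
  qed
  finally show ?thesis using fst_eq by (simp add: prod_eq_iff)
qed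

lemma witt_carrier_finite_nat_support: "x \<in> witt_carrier \<Longrightarrow> finite {n::nat. x (int n) \<noteq> 0}"
  using finite_vimageI[of "{i. x i \<noteq> 0}" int] by (simp add: witt_carrier_def vimage_def)

lemma jet_eq_sum:
  assumes "finite F" "{n. x (int n) \<noteq> 0} \<subseteq> F"
  shows "jet l x = (\<Sum>n\<in>F. jscale (x (int n)) (jet_gen l n))"
  unfolding jet_def by (rule sum.mono_neutral_left) (use assms in auto)

lemma jet_sum:
  assumes "finite J" "\<And>j. j \<in> J \<Longrightarrow> g j \<in> witt_carrier"
  shows "jet l (\<lambda>i. \<Sum>j\<in>J. g j i) = (\<Sum>j\<in>J. jet l (g j))"
proof -
  define F where "F = (\<Union>j\<in>J. {n. g j (int n) \<noteq> 0})"
  have F: "finite F" using assms witt_carrier_finite_nat_support by (auto simp: F_def)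
  have "jet l (\<lambda>i. \<Sum>j\<in>J. g j i) = (\<Sum>n\<in>F. jscale (\<Sum>j\<in>J. g j (int n)) (jet_gen l n))"
    by (rule jet_eq_sum[OF F]) (auto intro: ccontr simp: sum.neutral F_def)
  also have "\<dots> = (\<Sum>j\<in>J. \<Sum>n\<in>F. jscale (g j (int n)) (jet_gen l n))"
    by (simp add: jscale_sum_left sum.swap[of _ F])
  also have "\<dots> = (\<Sum>j\<in>J. jet l (g j))"
    by (rule sum.cong[OF refl], rule jet_eq_sum[symmetric]) (use F in \<open>auto simp: F_def\<close>)
  finally show ?thesis .
qed

lemma jet_scale:
  assumes "x \<in> witt_carrier"
  shows "jet l (\<lambda>i. c * x i) = jscale c (jet l x)"
proof -
  have "jet l (\<lambda>i. c * x i) = (\<Sum>n\<in>{n. x (int n) \<noteq> 0}. jscale (c * x (int n)) (jet_gen l n))"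
    by (rule jet_eq_sum) (use witt_carrier_finite_nat_support[OF assms] in auto)
  then show ?thesis
    unfolding jet_def by (simp add: jscale_sum jscale_jscale)
qed

lemma jet_add:
  assumes "x \<in> witt_carrier" "y \<in> witt_carrier"
  shows "jet l (\<lambda>i. x i + y i) = jet l x + jet l y"
proof -
  have "jet l (\<lambda>i. \<Sum>j\<in>{True, False}. (if j then x else y) i)
      = (\<Sum>j\<in>{True, False}. jet l (if j then x else y))"
    by (rule jet_sum) (use assms in auto)
  then show ?thesis by simp
qed

lemma jet_diff:
  assumes "x \<in> witt_carrier" "y \<in> witt_carrier"
  shows "jet l (\<lambda>i. a * x i - b * y i) = jscale a (jet l x) - jscale b (jet l y)"
  using jet_add[OF witt_carrier_scale[OF assms(1)] witt_carrier_scale[OF assms(2)], of l a "- b"]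
    jet_scale[OF assms(1), of l a] jet_scale[OF assms(2), of l "- b"]
    jscale_diff_left[of 0 b "jet l y"]
  by simp

lemma jet_Ogen:
  assumes "1 \<le> n"
  shows "jet l (Ogen l n) = jet_gen l n"
proof -
  have "jet l (Ogen l n) = (\<Sum>k\<in>{n}. jscale (Ogen l n (int k)) (jet_gen l k))"
    by (rule jet_eq_sum) (use assms in \<open>auto simp: Ogen_apply split: if_splits\<close>)
  then show ?thesis using assms by (simp add: Ogen_apply jscale_def qscale_def)
qed

lemma jet_wbracket_Ogen:
  assumes "1 \<le> n" "1 \<le> m"
  shows "jet l (wbracket (Ogen l n) (Ogen l m)) = jbracket l (jet_gen l n) (jet_gen l m)"
proof -
  consider "m < n" | "n = m" | "n < m" by linarith
  then show ?thesis
  proof cases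
    case 1
    then show ?thesis
      using assms unfolding wbracket_Ogen_greater[OF assms(2) 1]
      by (simp add: jet_diff Ogen_in_witt_carrier jet_Ogen jbracket_jet_gen)
  next
    case 2
    then show ?thesis
      using assms by (simp add: wbracket_Ogen_self jbracket_self jet_def)
  next
    case 3
    then have "jet l (wbracket (Ogen l n) (Ogen l m)) = - jbracket l (jet_gen l m) (jet_gen l n)"
      using assms unfolding wbracket_Ogen_less[OF assms(1) 3]
      by (simp add: jet_diff Ogen_in_witt_carrier jet_Ogen jbracket_jet_gen add.commute)
    then show ?thesis by (simp add: jbracket_antisym[of l "jet_gen l n"])
  qed
qed

lemma jet_Osub_expand:
  assumes "finite S" "S \<subseteq> {1..}"
  shows "jet l (\<lambda>i. \<Sum>n\<in>S. c n * Ogen l n i) = (\<Sum>n\<in>S. jscale (c n) (jet_gen l n))"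
  using assms
  by (subst jet_sum) (auto simp: jet_scale jet_Ogen Ogen_in_witt_carrier
      intro!: sum.cong witt_carrier_scale)

lemma jet_wbracket:
  assumes "x \<in> Osub l" "y \<in> Osub l"
  shows "jet l (wbracket x y) = jbracket l (jet l x) (jet l y)"
proof -
  obtain S c where S: "finite S" "S \<subseteq> {1..}" "x = (\<lambda>i. \<Sum>n\<in>S. c n * Ogen l n i)"
    using assms(1) unfolding Osub_def by blast
  obtain T d where T: "finite T" "T \<subseteq> {1..}" "y = (\<lambda>i. \<Sum>n\<in>T. d n * Ogen l n i)"
    using assms(2) unfolding Osub_def by blast
  have br: "wbracket (Ogen l n) (Ogen l m) \<in> witt_carrier" if "n \<in> S" "m \<in> T" for n m
    using that S(2) T(2) by (auto intro!: Osub_witt_carrier[of _ l] wbracket_Ogen_in_Osub)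
  have "jet l (wbracket x y)
      = jet l (\<lambda>p. \<Sum>n\<in>S. \<Sum>m\<in>T. c n * d m * wbracket (Ogen l n) (Ogen l m) p)"
    unfolding S(3) T(3) wbracket_Osub_expand[OF S(1,2) T(1)] ..
  also have "\<dots> = (\<Sum>n\<in>S. \<Sum>m\<in>T. jet l (\<lambda>p. c n * d m * wbracket (Ogen l n) (Ogen l m) p))"
    using S(1) T(1) br
    by (subst jet_sum) (auto intro!: witt_carrier_sum witt_carrier_scale sum.cong jet_sum)
  also have "\<dots> = (\<Sum>n\<in>S. \<Sum>m\<in>T. jscale (c n * d m) (jbracket l (jet_gen l n) (jet_gen l m)))"
  proof (intro sum.cong refl)
    fix n m assume nm: "n \<in> S" "m \<in> T"
    then have "1 \<le> n" "1 \<le> m" using S(2) T(2) by auto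
    then show "jet l (\<lambda>p. c n * d m * wbracket (Ogen l n) (Ogen l m) p)
        = jscale (c n * d m) (jbracket l (jet_gen l n) (jet_gen l m))"
      using br[OF nm] by (simp add: jet_scale jet_wbracket_Ogen)
  qed
  also have "\<dots> = jbracket l (\<Sum>n\<in>S. jscale (c n) (jet_gen l n)) (\<Sum>m\<in>T. jscale (d m) (jet_gen l m))"
    by (simp add: jbracket_sum_left jbracket_sum_right jbracket_jscale_left jbracket_jscale_right
        jscale_jscale jscale_sum mult.commute sum.swap[of _ T])
  also have "\<dots> = jbracket l (jet l x) (jet l y)"
    using S T by (simp add: jet_Osub_expand)
  finally show ?thesis .
qed

section \<open>Relations forced by an isomorphism\<close>

definition base_index :: "nat \<Rightarrow> nat" where
  "base_index n = (if odd n then 1 else 2)"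

(* w n is the jet of the preimage of the n-th generator of O(mu) under an isomorphism;
   w1 n and w3 n are its components a_n and c_n, and cross 2 1 is D. *)
locale jet_relations =
  fixes l mu :: "'k::field_char_0" and w :: "nat \<Rightarrow> ('k \<times> 'k) \<times> ('k \<times> 'k)"
  assumes jbracket_w: "\<And>n m. 1 \<le> m \<Longrightarrow> m < n \<Longrightarrow> jbracket l (w n) (w m)
    = jscale (of_nat (n - m)) (w (n + m)) - jscale (of_nat (n + m) * mu ^ m) (w (n - m))"
begin

definition w1 :: "nat \<Rightarrow> 'k \<times> 'k" where
  "w1 n = fst (w n)"

definition w3 :: "nat \<Rightarrow> 'k \<times> 'k" where
  "w3 n = snd (w n)"

definition cross :: "nat \<Rightarrow> nat \<Rightarrow> 'k \<times> 'k" where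
  "cross n m = qmul l (w1 n) (w3 m) - qmul l (w1 m) (w3 n)"

definition reduced :: "nat \<Rightarrow> bool" where
  "reduced n \<longleftrightarrow> (\<exists>t. w1 n = qscale t (w1 (base_index n))
     \<and> w3 n - qscale t (w3 (base_index n)) \<in> range (qmul l (cross 2 1)))"

lemma w1_rec:
  assumes "1 \<le> m" "m < n"
  shows "qscale (of_nat (n - m)) (w1 (n + m)) = qscale (of_nat (n + m) * mu ^ m) (w1 (n - m))"
proof -
  have "0 = qscale (of_nat (n - m)) (w1 (n + m)) - qscale (of_nat (n + m) * mu ^ m) (w1 (n - m))"
    using arg_cong[OF jbracket_w[OF assms], of fst]
    by (simp add: jbracket_def jscale_def w1_def zero_prod_def)
  then show ?thesis by simp
qed

lemma w3_rec:
  assumes "1 \<le> m" "m < n"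
  shows "qscale 4 (cross m n) = qscale (of_nat (n - m)) (w3 (n + m)) - qscale (of_nat (n + m) * mu ^ m) (w3 (n - m))"
  using arg_cong[OF jbracket_w[OF assms], of snd]
  by (simp add: jbracket_def jscale_def w1_def w3_def cross_def)

lemma cross_in_ideal_if_reduced:
  assumes "reduced n" "reduced m"
  shows "cross n m \<in> range (qmul l (cross 2 1))"
proof -
  let ?I = "range (qmul l (cross 2 1))"
  obtain t where t: "w1 n = qscale t (w1 (base_index n))" "w3 n - qscale t (w3 (base_index n)) \<in> ?I"
    using assms(1) unfolding reduced_def by blast
  obtain s where s: "w1 m = qscale s (w1 (base_index m))" "w3 m - qscale s (w3 (base_index m)) \<in> ?I"
    using assms(2) unfolding reduced_def by blast
  have "cross i j \<in> ?I" if "i \<in> {1, 2}" "j \<in> {1, 2}" for i j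
  proof -
    have "cross 1 2 = qmul l (cross 2 1) (-1, 0)"
      by (simp add: cross_def qmul_def prod_eq_iff algebra_simps)
    moreover have "cross i i = qmul l (cross 2 1) 0" for i
      by (simp add: cross_def)
    moreover have "cross 2 1 = qmul l (cross 2 1) (1, 0)"
      by (simp add: qmul_def)
    ultimately show ?thesis using that by (auto simp del: qmul_zero_right)
  qed
  then have base: "cross (base_index n) (base_index m) \<in> ?I"
    by (simp add: base_index_def)
  have "cross n m = qscale (t * s) (cross (base_index n) (base_index m))
      + qmul l (w1 n) (w3 m - qscale s (w3 (base_index m)))
      - qmul l (w1 m) (w3 n - qscale t (w3 (base_index n)))"
    by (simp add: t(1) s(1) cross_def qmul_def qscale_def prod_eq_iff algebra_simps)
  then show ?thesis
    using base s(2) t(2) by (simp add: range_qmul_add range_qmul_diff range_qmul_qscale range_qmul_qmul)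
qed

lemma reduced_of_ge_1:
  assumes "1 \<le> n"
  shows "reduced n"
  using assms
proof (induction n rule: less_induct)
  case (less n)
  show ?case
  proof (cases "n \<le> 2")
    case True
    then have "n = 1 \<or> n = 2" using less.prems by auto
    then have "base_index n = n" by (auto simp: base_index_def)
    then show ?thesis unfolding reduced_def by (intro exI[of _ 1]) (simp add: image_eqI[of 0 _ 0])
  next
    case False
    define k :: 'k where "k = of_nat (n - 2)"
    have k: "k \<noteq> 0" unfolding k_def of_nat_eq_0_iff using False by simp
    have base: "base_index (n - 2) = base_index n" using False by (simp add: base_index_def)
    have "reduced (n - 2)" by (rule less.IH) (use False in auto)
    then obtain t where t: "w1 (n - 2) = qscale t (w1 (base_index n))"
      "w3 (n - 2) - qscale t (w3 (base_index n)) \<in> range (qmul l (cross 2 1))"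
      unfolding reduced_def base by blast
    have "reduced 1" "reduced (n - 1)" by (rule less.IH; use False in auto)+
    then have cross: "cross 1 (n - 1) \<in> range (qmul l (cross 2 1))"
      by (rule cross_in_ideal_if_reduced)
    have w1n: "qscale k (w1 n) = qscale (of_nat n * mu) (w1 (n - 2))"
      using w1_rec[of 1 "n - 1"] False by (simp add: k_def numeral_2_eq_2)
    have w3n: "qscale 4 (cross 1 (n - 1)) = qscale k (w3 n) - qscale (of_nat n * mu) (w3 (n - 2))"
      using w3_rec[of 1 "n - 1"] False by (simp add: k_def numeral_2_eq_2)
    define t' where "t' = of_nat n * mu * t / k"
    have "w1 n = qscale t' (w1 (base_index n))"
      using w1n k by (simp add: t(1) t'_def qscale_def prod_eq_iff field_simps)
    moreover have "w3 n - qscale t' (w3 (base_index n))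
        = qscale (1 / k) (qscale 4 (cross 1 (n - 1))
          + qscale (of_nat n * mu) (w3 (n - 2) - qscale t (w3 (base_index n))))"
      using w3n k by (simp add: t'_def qscale_def prod_eq_iff field_simps)
    moreover have "\<dots> \<in> range (qmul l (cross 2 1))"
      using cross t(2) by (intro range_qmul_qscale range_qmul_add)
    ultimately show ?thesis
      unfolding reduced_def by auto
  qed
qed

lemma cross_in_ideal: "1 \<le> n \<Longrightarrow> 1 \<le> m \<Longrightarrow> cross n m \<in> range (qmul l (cross 2 1))"
  by (intro cross_in_ideal_if_reduced reduced_of_ge_1)

lemma w1_3: "w1 3 = qscale (3 * mu) (w1 1)"
  using w1_rec[of 1 2] by (simp add: numeral_3_eq_3)

lemma w1_4: "w1 4 = qscale (2 * mu) (w1 2)"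
  using w1_rec[of 1 3] by (simp add: qscale_def prod_eq_iff)

lemma w1_5: "w1 5 = qscale (5 * mu\<^sup>2) (w1 1)"
  using w1_rec[of 1 4] by (simp add: w1_3 qscale_def prod_eq_iff power2_eq_square)

lemma w1_6: "w1 6 = qscale (3 * mu\<^sup>2) (w1 2)"
  using w1_rec[of 1 5] by (simp add: w1_4 qscale_def prod_eq_iff power2_eq_square)

lemma w3_3: "w3 3 = qscale (3 * mu) (w3 1) - qscale 4 (cross 2 1)"
proof -
  have "qscale 4 (cross 1 2) = w3 3 - qscale (3 * mu) (w3 1)"
    using w3_rec[of 1 2] by simp
  then show ?thesis by (simp add: cross_def qscale_def qmul_def prod_eq_iff algebra_simps)
qed

lemma w3_4: "w3 4 = qscale (2 * mu) (w3 2) - qscale 8 (qmul l (w1 1) (cross 2 1))"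
proof -
  have "qscale 4 (cross 1 3) = qscale 2 (w3 4) - qscale (4 * mu) (w3 2)"
    using w3_rec[of 1 3] by simp
  then have "qscale 2 (w3 4) = qscale 2 (qscale (2 * mu) (w3 2) - qscale 8 (qmul l (w1 1) (cross 2 1)))"
    by (simp add: w3_3 w1_3 cross_def qscale_def qmul_def prod_eq_iff algebra_simps)
  then show ?thesis by (rule qscale_cancel[rotated]) simp
qed

lemma w3_5: "w3 5 = qscale (5 * mu\<^sup>2) (w3 1)
  - qmul l (cross 2 1) ((28 / 3 * mu, 0) + qscale (32 / 3) (qmul l (w1 1) (w1 1)))"
  (is "_ = ?rhs")
proof -
  have "qscale 3 (w3 5) = qscale 4 (cross 1 4) + qscale (5 * mu) (w3 3)"
    using w3_rec[of 1 4] by (simp add: eq_diff_eq)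
  also have "\<dots> = qscale 3 ?rhs"
    by (simp add: w3_3 w3_4 w1_4 cross_def qscale_def qmul_def prod_eq_iff field_simps
        power2_eq_square)
  finally show ?thesis by (rule qscale_cancel[rotated]) simp
qed

lemma w3_6: "w3 6 = qscale (3 * mu\<^sup>2) (w3 2)
  - qmul l (cross 2 1) (qscale (64 / 3 * mu) (w1 1) + qscale (32 / 3) (qmul l (w1 1) (qmul l (w1 1) (w1 1))))"
  (is "_ = ?rhs")
proof -
  have "qscale 4 (w3 6) = qscale 4 (cross 1 5) + qscale (6 * mu) (w3 4)"
    using w3_rec[of 1 5] by (simp add: eq_diff_eq)
  also have "\<dots> = qscale 4 ?rhs"
    by (simp add: w3_4 w3_5 w1_5 cross_def qscale_def qmul_def prod_eq_iff field_simps
        power2_eq_square)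
  finally show ?thesis by (rule qscale_cancel[rotated]) simp
qed

lemma w3_7: "w3 7 = qscale (7 * mu ^ 3) (w3 1)
  - qmul l (cross 2 1) ((232 / 15 * mu\<^sup>2, 0) + qscale (32 * mu) (qmul l (w1 1) (w1 1))
      + qscale (128 / 15) (qmul l (qmul l (w1 1) (w1 1)) (qmul l (w1 1) (w1 1))))"
  (is "_ = ?rhs")
proof -
  have "qscale 5 (w3 7) = qscale 4 (cross 1 6) + qscale (7 * mu) (w3 5)"
    using w3_rec[of 1 6] by (simp add: eq_diff_eq)
  also have "\<dots> = qscale 5 ?rhs"
    by (simp add: w3_5 w3_6 w1_6 cross_def qscale_def qmul_def prod_eq_iff field_simps
        power2_eq_square power3_eq_cube)
  finally show ?thesis by (rule qscale_cancel[rotated]) simp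
qed

lemma w1_2_quadratic:
  assumes "qmul l (cross 2 1) Di = (1, 0)"
  shows "qscale 3 (w1 2) = (4 * mu, 0) + qscale 2 (qmul l (w1 1) (w1 1))"
proof -
  have "qscale 4 (cross 2 3) = w3 5 - qscale (5 * mu\<^sup>2) (w3 1)"
    using w3_rec[of 2 3] by simp
  then have "qmul l (cross 2 1) (qscale (16 / 3) (qscale 3 (w1 2) - (4 * mu, 0)
      - qscale 2 (qmul l (w1 1) (w1 1)))) = 0"
    by (simp add: w3_3 w3_5 w1_3 cross_def qscale_def qmul_def prod_eq_iff field_simps
        power2_eq_square)
  then have "qscale (16 / 3) (qscale 3 (w1 2) - (4 * mu, 0) - qscale 2 (qmul l (w1 1) (w1 1))) = 0"
    by (rule qmul_cancel_unit[OF assms])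
  then show ?thesis by (simp add: qscale_eq_0_iff diff_eq_eq add.commute)
qed

lemma w1_1_quartic:
  assumes "qmul l (cross 2 1) Di = (1, 0)"
  shows "qmul l (qmul l (w1 1) (w1 1)) (qmul l (w1 1) (w1 1)) - qscale (5 * mu) (qmul l (w1 1) (w1 1))
    + (4 * mu\<^sup>2, 0) = 0"
proof -
  define u where "u = qmul l (w1 1) (w1 1)"
  define Z where "Z = (232 / 15 * mu\<^sup>2, 0) + qscale (32 * mu) u + qscale (128 / 15) (qmul l u u)
    - (24 * mu\<^sup>2, 0) - qscale (96 * mu) u + qscale (32 * mu) (w1 2)"
  have "qscale 4 (cross 3 4) = w3 7 - qscale (7 * mu ^ 3) (w3 1)"
    using w3_rec[of 3 4] by simp
  then have "qmul l (cross 2 1) Z = 0"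
    by (simp add: w3_3 w3_4 w3_7 w1_3 w1_4 Z_def u_def cross_def qscale_def qmul_def prod_eq_iff
        field_simps power2_eq_square power3_eq_cube)
  then have "Z = 0" by (rule qmul_cancel_unit[OF assms])
  moreover have "qscale 3 (w1 2) - (4 * mu, 0) - qscale 2 u = 0"
    using w1_2_quadratic[OF assms] by (simp add: u_def)
  moreover have "qmul l u u - qscale (5 * mu) u + (4 * mu\<^sup>2, 0)
      = qscale (15 / 128) (Z - qscale (32 * mu / 3) (qscale 3 (w1 2) - (4 * mu, 0) - qscale 2 u))"
    by (simp add: Z_def qscale_def qmul_def prod_eq_iff field_simps power2_eq_square)
  ultimately show ?thesis by (simp add: u_def)
qed

definition in_span :: "('k \<times> 'k) \<times> ('k \<times> 'k) \<Rightarrow> bool" where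
  "in_span u \<longleftrightarrow> (\<exists>T d. finite T \<and> T \<subseteq> {1..} \<and> u = (\<Sum>m\<in>T. jscale (d m) (w m)))"

lemma snd_jbracket_in_ideal:
  assumes "in_span u" "in_span v"
  shows "snd (jbracket l u v) \<in> range (qmul l (cross 2 1))"
proof -
  obtain S c where S: "finite S" "S \<subseteq> {1..}" "u = (\<Sum>m\<in>S. jscale (c m) (w m))"
    using assms(1) unfolding in_span_def by blast
  obtain T d where T: "finite T" "T \<subseteq> {1..}" "v = (\<Sum>m\<in>T. jscale (d m) (w m))"
    using assms(2) unfolding in_span_def by blast
  have "jbracket l u v = (\<Sum>n\<in>T. \<Sum>m\<in>S. jscale (d n) (jscale (c m) (jbracket l (w m) (w n))))"
    unfolding S(3) T(3)
    by (simp add: jbracket_sum_left jbracket_sum_right jbracket_jscale_left jbracket_jscale_right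
        jscale_sum)
  then have "snd (jbracket l u v) = (\<Sum>n\<in>T. \<Sum>m\<in>S. qscale (d n) (qscale (c m) (qscale 4 (cross n m))))"
    by (simp add: snd_sum jscale_def jbracket_def cross_def w1_def w3_def)
  also have "\<dots> \<in> range (qmul l (cross 2 1))"
    using S(2) T(2) by (intro range_qmul_sum range_qmul_qscale cross_in_ideal) auto
  finally show ?thesis .
qed

lemma cross_2_1_invertible:
  assumes "l \<noteq> 0" "in_span (jet_gen l 1)" "in_span (jet_gen l 2)"
  shows "\<exists>Di. qmul l (cross 2 1) Di = (1, 0)"
proof -
  have "snd (jbracket l (jet_gen l 1) (jet_gen l 2)) = (0, -24)"
    by (simp add: jet_gen_def jbracket_def qmul_def qscale_def numeral_2_eq_2)
  then obtain h where h: "qmul l (cross 2 1) h = (0, -24)"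
    using snd_jbracket_in_ideal[OF assms(2,3)] by auto
  have "qmul l (cross 2 1) (qscale (-1 / (24 * l)) (qmul l (0, 1) h))
      = qscale (-1 / (24 * l)) (qmul l (0, 1) (qmul l (cross 2 1) h))"
    by (simp add: qmul_def qscale_def prod_eq_iff algebra_simps)
  also have "\<dots> = (1, 0)" unfolding h using assms(1) by (simp add: qmul_def qscale_def)
  finally show ?thesis by blast
qed

lemma fst_in_span:
  assumes "in_span u"
  shows "\<exists>\<alpha> \<beta>. fst u = qscale \<alpha> (w1 1) + qscale \<beta> (w1 2)"
proof -
  obtain T d where T: "finite T" "T \<subseteq> {1..}" "u = (\<Sum>m\<in>T. jscale (d m) (w m))"
    using assms unfolding in_span_def by blast
  have "\<exists>\<alpha> \<beta>. (\<Sum>m\<in>T. qscale (d m) (w1 m)) = qscale \<alpha> (w1 1) + qscale \<beta> (w1 2)"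
    using T(1,2)
  proof (induction T rule: finite_induct)
    case empty
    show ?case by (intro exI[of _ 0]) simp
  next
    case (insert m T)
    then obtain \<alpha> \<beta> where IH: "(\<Sum>m\<in>T. qscale (d m) (w1 m)) = qscale \<alpha> (w1 1) + qscale \<beta> (w1 2)"
      by auto
    obtain t where t: "w1 m = qscale t (w1 (base_index m))"
      using reduced_of_ge_1[of m] insert.prems unfolding reduced_def by auto
    show ?case
    proof (cases "odd m")
      case True
      then have "(\<Sum>m\<in>insert m T. qscale (d m) (w1 m)) = qscale (\<alpha> + d m * t) (w1 1) + qscale \<beta> (w1 2)"
        using insert.hyps IH t by (simp add: base_index_def qscale_def prod_eq_iff algebra_simps)
      then show ?thesis by blast
    next
      case False
      then have "(\<Sum>m\<in>insert m T. qscale (d m) (w1 m)) = qscale \<alpha> (w1 1) + qscale (\<beta> + d m * t) (w1 2)"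
        using insert.hyps IH t by (simp add: base_index_def qscale_def prod_eq_iff algebra_simps)
      then show ?thesis by blast
    qed
  qed
  then show ?thesis unfolding T(3) by (simp add: fst_sum jscale_def w1_def)
qed

lemma w1_independent:
  assumes "l \<noteq> 0" "in_span (jet_gen l 1)" "in_span (jet_gen l 2)"
  shows "fst (w1 1) * snd (w1 2) - fst (w1 2) * snd (w1 1) \<noteq> 0"
proof
  assume det: "fst (w1 1) * snd (w1 2) - fst (w1 2) * snd (w1 1) = 0"
  obtain \<alpha> \<beta> where 1: "(0, 1) = qscale \<alpha> (w1 1) + qscale \<beta> (w1 2)"
    using fst_in_span[OF assms(2)] by (auto simp: jet_gen_def qmul_def qscale_def)
  obtain \<alpha>' \<beta>' where 2: "(2 * l, 0) = qscale \<alpha>' (w1 1) + qscale \<beta>' (w1 2)"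
    using fst_in_span[OF assms(3)] by (auto simp: jet_gen_def qmul_def qscale_def numeral_2_eq_2)
  have "0 * 0 - 2 * l * 1 = (\<alpha> * \<beta>' - \<alpha>' * \<beta>) * (fst (w1 1) * snd (w1 2) - fst (w1 2) * snd (w1 1))"
    using 1 2 by (simp add: qscale_def prod_eq_iff) algebra
  then show False using det assms(1) by simp
qed

lemma exists_sqrt_ratio_if_span:
  assumes "l \<noteq> 0" "mu \<noteq> 0" "in_span (jet_gen l 1)" "in_span (jet_gen l 2)"
  shows "\<exists>r. r\<^sup>2 = l / mu"
proof -
  obtain Di where "qmul l (cross 2 1) Di = (1, 0)"
    using cross_2_1_invertible[OF assms(1,3,4)] by blast
  then show ?thesis
    using exists_sqrt_ratio[OF assms(2) w1_2_quadratic w1_1_quartic w1_independent[OF assms(1,3,4)]]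
    by blast
qed

end

section \<open>Pulling back the generators along an isomorphism\<close>

locale Osub_iso =
  fixes lam mu :: "'k::field_char_0" and phi :: "(int \<Rightarrow> 'k) \<Rightarrow> int \<Rightarrow> 'k"
  assumes bij: "bij_betw phi (Osub lam) (Osub mu)"
    and linear: "\<And>x y a b. x \<in> Osub lam \<Longrightarrow> y \<in> Osub lam \<Longrightarrow>
      phi (\<lambda>i. a * x i + b * y i) = (\<lambda>i. a * phi x i + b * phi y i)"
    and bracket: "\<And>x y. x \<in> Osub lam \<Longrightarrow> y \<in> Osub lam \<Longrightarrow>
      phi (wbracket x y) = wbracket (phi x) (phi y)"
begin

definition pre_gen :: "nat \<Rightarrow> int \<Rightarrow> 'k" where
  "pre_gen n = inv_into (Osub lam) phi (Ogen mu n)"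

definition jet_pre_gen :: "nat \<Rightarrow> ('k \<times> 'k) \<times> ('k \<times> 'k)" where
  "jet_pre_gen n = jet lam (pre_gen n)"

lemma pre_gen_in_Osub: "1 \<le> n \<Longrightarrow> pre_gen n \<in> Osub lam"
  unfolding pre_gen_def
  using bij_betw_imp_surj_on[OF bij] Ogen_in_Osub[of n mu] by (auto intro: inv_into_into)

lemma phi_pre_gen: "1 \<le> n \<Longrightarrow> phi (pre_gen n) = Ogen mu n"
  unfolding pre_gen_def
  using bij_betw_imp_surj_on[OF bij] Ogen_in_Osub[of n mu] by (simp add: f_inv_into_f)

lemma phi_eqD: "x \<in> Osub lam \<Longrightarrow> y \<in> Osub lam \<Longrightarrow> phi x = phi y \<Longrightarrow> x = y"
  using bij_betw_imp_inj_on[OF bij] by (auto dest: inj_onD)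

lemma phi_sum:
  assumes "finite J" "\<And>j. j \<in> J \<Longrightarrow> g j \<in> Osub lam"
  shows "phi (\<lambda>i. \<Sum>j\<in>J. d j * g j i) = (\<lambda>i. \<Sum>j\<in>J. d j * phi (g j) i)"
  using assms
proof (induction J rule: finite_induct)
  case empty
  have "Ogen lam 1 \<in> Osub lam" by (rule Ogen_in_Osub) simp
  then show ?case using linear[of "Ogen lam 1" "Ogen lam 1" 0 0] by simp
next
  case (insert j J)
  have "(\<lambda>i. \<Sum>j\<in>J. d j * g j i) \<in> Osub lam"
    using insert.prems by (intro Osub_sum[OF insert.hyps(1)] Osub_scale) auto
  then show ?case
    using insert linear[of "g j" "\<lambda>i. \<Sum>j\<in>J. d j * g j i" "d j" 1] by simp
qed

lemma wbracket_pre_gen: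
  assumes "1 \<le> m" "m < n"
  shows "wbracket (pre_gen n) (pre_gen m)
    = (\<lambda>i. of_nat (n - m) * pre_gen (n + m) i - of_nat (n + m) * mu ^ m * pre_gen (n - m) i)"
proof (rule phi_eqD)
  have pre: "pre_gen (n + m) \<in> Osub lam" "pre_gen (n - m) \<in> Osub lam"
    "pre_gen n \<in> Osub lam" "pre_gen m \<in> Osub lam"
    using assms by (auto intro!: pre_gen_in_Osub)
  then show "wbracket (pre_gen n) (pre_gen m) \<in> Osub lam"
    by (simp add: Osub_wbracket)
  show "(\<lambda>i. of_nat (n - m) * pre_gen (n + m) i - of_nat (n + m) * mu ^ m * pre_gen (n - m) i) \<in> Osub lam"
    using pre by (simp add: Osub_diff)
  have "phi (\<lambda>i. of_nat (n - m) * pre_gen (n + m) i - of_nat (n + m) * mu ^ m * pre_gen (n - m) i)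
      = (\<lambda>i. of_nat (n - m) * Ogen mu (n + m) i - of_nat (n + m) * mu ^ m * Ogen mu (n - m) i)"
    using linear[of "pre_gen (n + m)" "pre_gen (n - m)" "of_nat (n - m)" "- (of_nat (n + m) * mu ^ m)"]
      pre assms by (simp add: phi_pre_gen)
  also have "\<dots> = phi (wbracket (pre_gen n) (pre_gen m))"
    using assms pre by (simp add: wbracket_Ogen_greater bracket phi_pre_gen)
  finally show "phi (wbracket (pre_gen n) (pre_gen m)) = phi (\<lambda>i. of_nat (n - m) * pre_gen (n + m) i
      - of_nat (n + m) * mu ^ m * pre_gen (n - m) i)" ..
qed

sublocale jet_relations lam mu jet_pre_gen
proof
  fix n m :: nat
  assume nm: "1 \<le> m" "m < n"
  then have "pre_gen (n + m) \<in> Osub lam" "pre_gen (n - m) \<in> Osub lam"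
    "pre_gen n \<in> Osub lam" "pre_gen m \<in> Osub lam"
    by (auto intro!: pre_gen_in_Osub)
  then show "jbracket lam (jet_pre_gen n) (jet_pre_gen m) = jscale (of_nat (n - m)) (jet_pre_gen (n + m))
      - jscale (of_nat (n + m) * mu ^ m) (jet_pre_gen (n - m))"
    unfolding jet_pre_gen_def
    by (simp add: jet_wbracket[symmetric] wbracket_pre_gen[OF nm] jet_diff Osub_witt_carrier)
qed

lemma in_span_jet_gen:
  assumes "1 \<le> k"
  shows "in_span (jet_gen lam k)"
proof -
  have "phi (Ogen lam k) \<in> Osub mu"
    using bij_betw_imp_surj_on[OF bij] Ogen_in_Osub[OF assms] by auto
  then obtain T d where T: "finite T" "T \<subseteq> {1..}" "phi (Ogen lam k) = (\<lambda>i. \<Sum>m\<in>T. d m * Ogen mu m i)"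
    unfolding Osub_def by blast
  have pre: "\<And>m. m \<in> T \<Longrightarrow> pre_gen m \<in> Osub lam" using T(2) by (auto intro!: pre_gen_in_Osub)
  have "Ogen lam k = (\<lambda>i. \<Sum>m\<in>T. d m * pre_gen m i)"
  proof (rule phi_eqD)
    show "Ogen lam k \<in> Osub lam" by (rule Ogen_in_Osub[OF assms])
    show "(\<lambda>i. \<Sum>m\<in>T. d m * pre_gen m i) \<in> Osub lam"
      using pre T(1) by (intro Osub_sum Osub_scale) auto
    show "phi (Ogen lam k) = phi (\<lambda>i. \<Sum>m\<in>T. d m * pre_gen m i)"
    proof -
      have "phi (pre_gen m) = Ogen mu m" if "m \<in> T" for m
        using that T(2) by (simp add: phi_pre_gen subset_eq)
      then show ?thesis by (simp add: phi_sum[OF T(1) pre] T(3))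
    qed
  qed
  then have "jet_gen lam k = jet lam (\<lambda>i. \<Sum>m\<in>T. d m * pre_gen m i)"
    using jet_Ogen[OF assms, of lam] by simp
  also have "\<dots> = (\<Sum>m\<in>T. jet lam (\<lambda>i. d m * pre_gen m i))"
    by (rule jet_sum[OF T(1)]) (use pre in \<open>auto intro: witt_carrier_scale Osub_witt_carrier\<close>)
  also have "\<dots> = (\<Sum>m\<in>T. jscale (d m) (jet_pre_gen m))"
    using pre by (intro sum.cong) (auto simp: jet_scale Osub_witt_carrier[of _ lam] jet_pre_gen_def)
  finally show ?thesis
    unfolding in_span_def using T(1,2) by blast
qed

end

lemma Osub_iso_if_lie_iso_sub:
  assumes "lie_iso_sub (Osub lam) (Osub mu)"
  shows "\<exists>phi. Osub_iso lam mu phi"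
  using assms unfolding lie_iso_sub_def Osub_iso_def wadd_def wscale_def by blast

theorem proposition4p22:
  fixes lam mu :: "'k::field_char_0"
  assumes "lam \<noteq> 0" and "mu \<noteq> 0"
  shows "lie_iso_sub (Osub lam) (Osub mu) \<longleftrightarrow> (\<exists>r::'k. r ^ 2 = lam / mu)"
proof
  assume "lie_iso_sub (Osub lam) (Osub mu)"
  then obtain phi where "Osub_iso lam mu phi"
    using Osub_iso_if_lie_iso_sub by blast
  then interpret Osub_iso lam mu phi .
  show "\<exists>r. r ^ 2 = lam / mu"
    using exists_sqrt_ratio_if_span[OF assms in_span_jet_gen in_span_jet_gen] by simp
next
  assume "\<exists>r. r ^ 2 = lam / mu"
  then show "lie_iso_sub (Osub lam) (Osub mu)"
    using lie_iso_sub_Osub_if_square[OF assms] by blast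
qed

end
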